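(* Let $\mathcal{A}$ be the B\"uchi automaton over $\{a,b\}$ with states $q_0$ (initial) and $q_1$ (accepting) and transitions $q_0\xrightarrow{a}q_1$, $q_1\xrightarrow{b}q_0$, so that $\mathfrak{L}(\mathcal{A})=\{(ab)^\omega\}$. Then there is no automaton $\mathcal{C}$ with $\mathfrak{J}(\mathcal{C})=\mathfrak{J}_{\exists\boxplus}(\mathcal{A})$. In particular, $(ab)^\omega\in\mathfrak{J}_{\exists\boxplus}(\mathcal{A})$ while the word $aba^2b^2a^3b^3\cdots$ (which satisfies $\sim$ with $(ab)^\omega$) is not in $\mathfrak{J}_{\exists\boxplus}(\mathcal{A})$.
   Context: Automata are nondeterministic B\"uchi automata over infinite words. For $w\in\Sigma^\omega$, $\Psi(w)\in\mathbb{N}_\infty^\Sigma$ gives the number of occurrences of each letter ($\infty$ if infinite); $w\sim w'$ iff $\Psi(w)=\Psi(w')$; $\mathfrak{J}(\mathcal{C})=\{w:\exists w'\sim w,\ w'\in\mathfrak{L}(\mathcal{C})\}$. For $k\ge1$, $w\sim_{k\boxplus}w'$ means $w=x_1x_2\cdots$, $w'=y_1y_2\cdots$ with $|x_i|=|y_i|=k$ and each $y_i$ a permutation of $x_i$. $\mathfrak{J}_{\exists\boxplus}(\mathcal{A})=\{w:\exists k\ge1\ \exists w'\sim_{k\boxplus}w,\ w'\in\mathfrak{L}(\mathcal{A})\}$. *)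

theory Defs
  imports Main "HOL-Library.Extended_Nat" "HOL-Library.Multiset"
begin

record ('s, 'a) nba =
  states :: "'s set"
  init   :: "'s set"
  delta  :: "('s \<times> 'a \<times> 's) set"
  acc    :: "'s set"

definition wf_nba :: "('s, 'a) nba \<Rightarrow> bool" where
  "wf_nba C \<longleftrightarrow> finite (states C) \<and> init C \<subseteq> states C \<and> acc C \<subseteq> states C
     \<and> (\<forall>p x q. (p, x, q) \<in> delta C \<longrightarrow> p \<in> states C \<and> q \<in> states C)"

definition accepting_run :: "('s, 'a) nba \<Rightarrow> (nat \<Rightarrow> 'a) \<Rightarrow> (nat \<Rightarrow> 's) \<Rightarrow> bool" where
  "accepting_run C w r \<longleftrightarrow> r 0 \<in> init C \<and> (\<forall>i. (r i, w i, r (Suc i)) \<in> delta C)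
     \<and> (\<exists>\<^sub>\<infinity> i. r i \<in> acc C)"

definition lang :: "('s, 'a) nba \<Rightarrow> (nat \<Rightarrow> 'a) set" where
  "lang C = {w. \<exists>r. accepting_run C w r}"

definition Psi :: "(nat \<Rightarrow> 'a) \<Rightarrow> 'a \<Rightarrow> enat" where
  "Psi w x = (if finite {i. w i = x} then enat (card {i. w i = x}) else \<infinity>)"

definition parikh_equiv :: "(nat \<Rightarrow> 'a) \<Rightarrow> (nat \<Rightarrow> 'a) \<Rightarrow> bool" where
  "parikh_equiv w w' \<longleftrightarrow> Psi w = Psi w'"

definition J :: "('s, 'a) nba \<Rightarrow> (nat \<Rightarrow> 'a) set" where
  "J C = {w. \<exists>w'. parikh_equiv w w' \<and> w' \<in> lang C}"

definition block :: "nat \<Rightarrow> (nat \<Rightarrow> 'a) \<Rightarrow> nat \<Rightarrow> 'a list" where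
  "block k w i = map w [i * k..<(Suc i) * k]"

definition block_equiv :: "nat \<Rightarrow> (nat \<Rightarrow> 'a) \<Rightarrow> (nat \<Rightarrow> 'a) \<Rightarrow> bool" where
  "block_equiv k w w' \<longleftrightarrow> (\<forall>i. mset (block k w' i) = mset (block k w i))"

definition J_ex_box :: "('s, 'a) nba \<Rightarrow> (nat \<Rightarrow> 'a) set" where
  "J_ex_box A = {w. \<exists>k\<ge>1. \<exists>w'. block_equiv k w w' \<and> w' \<in> lang A}"

datatype ab = a | b

definition A_ab :: "(nat, ab) nba" where
  "A_ab = \<lparr> states = {0, 1}, init = {0}, delta = {(0, a, 1), (1, b, 0)}, acc = {1} \<rparr>"

definition ab_omega :: "nat \<Rightarrow> ab" where
  "ab_omega i = (if even i then a else b)"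

text \<open>The word a b a^2 b^2 a^3 b^3 ...: block number n (n = 0,1,...) is a^(n+1) b^(n+1),
  occupying positions n(n+1) ..< (n+1)(n+2).\<close>
definition stair_word :: "nat \<Rightarrow> ab" where
  "stair_word p = (let n = (LEAST n. p < (n + 1) * (n + 2))
                   in if p - n * (n + 1) < n + 1 then a else b)"

end

theory Submission
  imports Defs
begin

text \<open>The words \<open>(ab)\<^sup>\<omega>\<close> and \<open>aba\<^sup>2b\<^sup>2a\<^sup>3b\<^sup>3\<cdots>\<close> both contain infinitely many \<open>a\<close>s and \<open>b\<close>s,
  so they are Parikh equivalent, and every language of the form \<open>\<frak>J(\<C>)\<close> is closed under Parikh
  equivalence. But \<open>\<frak>J\<^sub>\<exists>\<^sub>\<boxplus>(\<A>)\<close> separates them: for block length \<open>k\<close>, any two adjacent blocks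
  of \<open>(ab)\<^sup>\<omega>\<close> contain a \<open>b\<close>, whereas the staircase word has a run of \<open>3k + 1\<close> consecutive \<open>a\<close>s,
  which covers two adjacent blocks entirely.\<close>

lemma J_closed_parikh_equiv:
  assumes "w \<in> J C" and "parikh_equiv w w'"
  shows "w' \<in> J C"
  using assms unfolding J_def parikh_equiv_def by auto

lemma Psi_eq_infinity:
  assumes "\<And>m. \<exists>p>m. w p = x"
  shows "Psi w x = \<infinity>"
  using assms infinite_nat_iff_unbounded[of "{p. w p = x}"] unfolding Psi_def by auto

lemma set_block: "set (block k w i) = w ` {i * k..<Suc i * k}"
  unfolding block_def by simp

lemma block_equiv_refl: "block_equiv k w w"
  unfolding block_equiv_def by simp

lemma block_equiv_set_block:
  "block_equiv k w w' \<Longrightarrow> set (block k w' i) = set (block k w i)"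
  unfolding block_equiv_def by (metis set_mset_mset)

lemma lang_A_ab: "lang A_ab = {ab_omega}"
proof
  show "lang A_ab \<subseteq> {ab_omega}"
  proof
    fix w assume "w \<in> lang A_ab"
    then obtain r where "accepting_run A_ab w r" unfolding lang_def by auto
    then have r0: "r 0 = 0" and step: "\<And>i. (r i, w i, r (Suc i)) \<in> {(0, a, 1), (1, b, 0)}"
      unfolding accepting_run_def A_ab_def by auto
    have r: "r i = (if even i then 0 else 1)" for i
    proof (induction i)
      case (Suc i)
      then show ?case using step[of i] by auto
    qed (simp add: r0)
    have "w i = ab_omega i" for i
      using step[of i] r[of i] unfolding ab_omega_def by (auto split: if_splits)
    then show "w \<in> {ab_omega}" by auto
  qed
next
  define r :: "nat \<Rightarrow> nat" where "r i = (if even i then 0 else 1)" for i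
  have "\<exists>p>m. r p = 1" for m
    by (rule exI[of _ "2 * m + 1"]) (simp add: r_def)
  then have "accepting_run A_ab ab_omega r"
    unfolding accepting_run_def A_ab_def INFM_nat by (simp add: r_def ab_omega_def)
  then show "{ab_omega} \<subseteq> lang A_ab" unfolding lang_def by auto
qed

lemma Psi_ab_omega: "Psi ab_omega x = \<infinity>"
proof (rule Psi_eq_infinity)
  fix m
  have "ab_omega (2 * m + 2) = a" "ab_omega (2 * m + 1) = b"
    unfolding ab_omega_def by auto
  then show "\<exists>p>m. ab_omega p = x" by (cases x) (auto intro: exI[of _ "2 * m + 2"] exI[of _ "2 * m + 1"])
qed

lemma stair_word_block:
  assumes "j < 2 * (n + 1)"
  shows "stair_word (n * (n + 1) + j) = (if j < n + 1 then a else b)"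
proof -
  have "(LEAST m. n * (n + 1) + j < (m + 1) * (m + 2)) = n"
  proof (rule Least_equality)
    show "n * (n + 1) + j < (n + 1) * (n + 2)" using assms by (simp add: algebra_simps)
  next
    fix m assume below: "n * (n + 1) + j < (m + 1) * (m + 2)"
    show "n \<le> m"
    proof (rule ccontr)
      assume "\<not> n \<le> m"
      then have "(m + 1) * (m + 2) \<le> n * (n + 1)" by (intro mult_mono) auto
      with below show False by simp
    qed
  qed
  then show ?thesis unfolding stair_word_def Let_def by simp
qed

lemma stair_word_a_run: "n * (n + 1) \<le> p \<Longrightarrow> p \<le> n * (n + 1) + n \<Longrightarrow> stair_word p = a"
  using stair_word_block[of "p - n * (n + 1)" n] by simp

lemma Psi_stair_word: "Psi stair_word x = \<infinity>"
proof (rule Psi_eq_infinity)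
  fix m
  have "stair_word ((m + 1) * (m + 2)) = a"
    using stair_word_a_run[of "m + 1"] by (simp add: algebra_simps)
  moreover have "stair_word (m * (m + 1) + (m + 1)) = b"
    using stair_word_block[of "m + 1" m] by simp
  ultimately show "\<exists>p>m. stair_word p = x"
    by (cases x) (auto intro: exI[of _ "(m + 1) * (m + 2)"] exI[of _ "m * (m + 1) + (m + 1)"])
qed

lemma parikh_equiv_stair_word_ab_omega: "parikh_equiv stair_word ab_omega"
  unfolding parikh_equiv_def using Psi_stair_word Psi_ab_omega by auto

text \<open>The positions \<open>(i+1)k - 1\<close> and \<open>(i+1)k\<close> lie in blocks \<open>i\<close> and \<open>i+1\<close>, and one of them is odd.\<close>

lemma b_in_adjacent_blocks_ab_omega:
  assumes "k \<ge> 1"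
  shows "b \<in> set (block k ab_omega i) \<union> set (block k ab_omega (Suc i))"
proof -
  have "Suc i * k - 1 \<in> {i * k..<Suc i * k}" "Suc i * k \<in> {Suc i * k..<Suc (Suc i) * k}"
    using assms by auto
  moreover have "ab_omega (Suc i * k - 1) = b \<or> ab_omega (Suc i * k) = b"
    using assms unfolding ab_omega_def by (cases "Suc i * k") auto
  ultimately show ?thesis unfolding set_block by (metis UnI1 UnI2 image_eqI)
qed

lemma adjacent_blocks_within:
  assumes "k \<ge> 1"
  obtains i where "s \<le> i * k" and "Suc (Suc i) * k \<le> s + 3 * k"
proof
  have "k * (s div k) + s mod k = s" "s mod k < k" using assms by simp_all
  then show "s \<le> (s div k + 1) * k" "Suc (Suc (s div k + 1)) * k \<le> s + 3 * k"
    by (simp_all add: algebra_simps, linarith)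
qed

lemma stair_word_notin_J_ex_box: "stair_word \<notin> J_ex_box A_ab"
proof
  assume "stair_word \<in> J_ex_box A_ab"
  then obtain k where k: "k \<ge> 1" and equiv: "block_equiv k stair_word ab_omega"
    unfolding J_ex_box_def lang_A_ab by auto
  define s where "s = 3 * k * (3 * k + 1)"
  obtain i where i: "s \<le> i * k" "Suc (Suc i) * k \<le> s + 3 * k"
    using adjacent_blocks_within k by blast
  have "stair_word p = a" if "p \<in> {i * k..<Suc (Suc i) * k}" for p
    using that i stair_word_a_run[of "3 * k" p] unfolding s_def by auto
  then have "b \<notin> set (block k stair_word i) \<union> set (block k stair_word (Suc i))"
    unfolding set_block by fastforce
  then show False
    using b_in_adjacent_blocks_ab_omega[OF k, of i] block_equiv_set_block[OF equiv] by simp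
qed

lemma ab_omega_in_J_ex_box: "ab_omega \<in> J_ex_box A_ab"
  unfolding J_ex_box_def lang_A_ab using block_equiv_refl by blast

theorem mainTheorem14:
  shows "lang A_ab = {ab_omega}
    \<and> (\<nexists>C :: ('s, ab) nba. wf_nba C \<and> J C = J_ex_box A_ab)
    \<and> ab_omega \<in> J_ex_box A_ab
    \<and> parikh_equiv stair_word ab_omega
    \<and> stair_word \<notin> J_ex_box A_ab"
proof -
  have "J C \<noteq> J_ex_box A_ab" for C :: "('s, ab) nba"
  proof
    assume J_eq: "J C = J_ex_box A_ab"
    have "parikh_equiv ab_omega stair_word"
      using parikh_equiv_stair_word_ab_omega unfolding parikh_equiv_def by simp
    then have "stair_word \<in> J C"
      using J_closed_parikh_equiv ab_omega_in_J_ex_box J_eq by blast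
    then show False using J_eq stair_word_notin_J_ex_box by simp
  qed
  then show ?thesis
    using lang_A_ab ab_omega_in_J_ex_box parikh_equiv_stair_word_ab_omega
      stair_word_notin_J_ex_box by blast
qed

end
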